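(* Let $\Phi=\forall u_1\ldots\forall u_n\exists e_1(D_1)\ldots\exists e_m(D_m).\varphi$ be a DQBF, let $A$ be a set of arbiter variables with arbiter clauses $\varphi_A$, let $\tau\in[A]$, and let $\psi_{\mathit{Def}}=\bigwedge_{e\in E}(e\leftrightarrow\psi_e)$, where each $\psi_e$ is a definition for $e$ by $D(e)\cup A$ in $\varphi\wedge\varphi_A$. If $\neg\varphi\wedge\psi_{\mathit{Def}}\wedge\tau$ is satisfied by an assignment $\sigma$, then $\varphi\wedge\varphi_A\wedge\tau\wedge\sigma|_U$ is unsatisfiable.
   Context: For a set $V$ of variables, $[V]$ is the set of assignments $V\to\{\textsc{true},\textsc{false}\}$; assignments are identified with terms of the literals they make true, $\neg\sigma$ is the clause of the negations of these literals, and $\sigma|_W$ denotes restriction. A DQBF is $\Phi=\forall u_1\ldots\forall u_n\exists e_1(D_1)\ldots\exists e_m(D_m).\varphi$ with pairwise distinct variables, $U=\{u_i\}$, $E=\{e_j\}$, dependency sets $D(e_j)=D_j\subseteq U$, and $\varphi$ a CNF over $U\cup E$. Arbiter variables: for $e\in E$ and $\sigma\in[D(e)]$, $e^\sigma$ is a fresh variable; for a set $A$ of these, $\varphi_A=\bigwedge_{e^\sigma\in A}\big((e^\sigma\vee\neg\sigma\vee\neg e)\wedge(\neg e^\sigma\vee\neg\sigma\vee e)\big)$. A definition for a variable $x$ by a set $X$ of variables in a formula $\varphi$ is a formula $\psi$ with $\mathit{var}(\psi)\subseteq X$ such that every satisfying assignment $\sigma$ of $\varphi$ has $\sigma(x)=\psi[\sigma]$.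 *)

theory Defs
  imports Main
begin

text \<open>Variables of a DQBF together with arbiter variables.  An assignment
  sigma in [D(e)] is encoded by the set S \<subseteq> D(e) of variables it makes true;
  the arbiter variable e^sigma is Arb e S.\<close>
datatype ('u, 'e) var = UVar 'u | EVar 'e | Arb 'e "'u set"

type_synonym 'v lit = "'v \<times> bool"
type_synonym 'v clause = "'v lit set"
type_synonym 'v cnf = "'v clause set"

definition sat_clause :: "('v \<Rightarrow> bool) \<Rightarrow> 'v clause \<Rightarrow> bool" where
  "sat_clause \<rho> C \<longleftrightarrow> (\<exists>(x, b) \<in> C. \<rho> x = b)"

definition sat_cnf :: "('v \<Rightarrow> bool) \<Rightarrow> 'v cnf \<Rightarrow> bool" where
  "sat_cnf \<rho> F \<longleftrightarrow> (\<forall>C \<in> F. sat_clause \<rho> C)"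

definition cnf_vars :: "'v cnf \<Rightarrow> 'v set" where
  "cnf_vars F = {x. \<exists>C \<in> F. \<exists>b. (x, b) \<in> C}"

datatype 'v form = FTrue | FFalse | FVar 'v | FNot "'v form"
  | FAnd "'v form" "'v form" | FOr "'v form" "'v form"

primrec eval :: "('v \<Rightarrow> bool) \<Rightarrow> 'v form \<Rightarrow> bool" where
  "eval \<rho> FTrue = True"
| "eval \<rho> FFalse = False"
| "eval \<rho> (FVar x) = \<rho> x"
| "eval \<rho> (FNot f) = (\<not> eval \<rho> f)"
| "eval \<rho> (FAnd f g) = (eval \<rho> f \<and> eval \<rho> g)"
| "eval \<rho> (FOr f g) = (eval \<rho> f \<or> eval \<rho> g)"

primrec fvars :: "'v form \<Rightarrow> 'v set" where
  "fvars FTrue = {}"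
| "fvars FFalse = {}"
| "fvars (FVar x) = {x}"
| "fvars (FNot f) = fvars f"
| "fvars (FAnd f g) = fvars f \<union> fvars g"
| "fvars (FOr f g) = fvars f \<union> fvars g"

definition dqbf :: "'u set \<Rightarrow> 'e set \<Rightarrow> ('e \<Rightarrow> 'u set) \<Rightarrow> ('u,'e) var cnf \<Rightarrow> bool" where
  "dqbf U E D \<phi> \<longleftrightarrow> finite U \<and> finite E \<and> (\<forall>e \<in> E. D e \<subseteq> U) \<and> finite \<phi>
     \<and> (\<forall>C \<in> \<phi>. finite C) \<and> cnf_vars \<phi> \<subseteq> UVar ` U \<union> EVar ` E"

definition arbiters :: "'e set \<Rightarrow> ('e \<Rightarrow> 'u set) \<Rightarrow> ('u,'e) var set" where
  "arbiters E D = {Arb e S | e S. e \<in> E \<and> S \<subseteq> D e}"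

text \<open>The clause \<not>sigma for sigma \<in> [D(e)] encoded by S.\<close>
definition neg_term :: "'u set \<Rightarrow> 'u set \<Rightarrow> ('u,'e) var clause" where
  "neg_term De S = {(UVar u, u \<notin> S) | u. u \<in> De}"

text \<open>phi_A = \<And>_{e^sigma \<in> A} (e^sigma \<or> \<not>sigma \<or> \<not>e) \<and> (\<not>e^sigma \<or> \<not>sigma \<or> e).\<close>
definition arb_clauses :: "('e \<Rightarrow> 'u set) \<Rightarrow> ('u,'e) var set \<Rightarrow> ('u,'e) var cnf" where
  "arb_clauses D A = (\<Union>e S. if Arb e S \<in> A then
      {insert (Arb e S, True) (insert (EVar e, False) (neg_term (D e) S)),
       insert (Arb e S, False) (insert (EVar e, True) (neg_term (D e) S))} else {})"

definition is_definition :: "'v form \<Rightarrow> 'v \<Rightarrow> 'v set \<Rightarrow> 'v cnf \<Rightarrow> bool" where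
  "is_definition \<psi> x X F \<longleftrightarrow> fvars \<psi> \<subseteq> X \<and> (\<forall>\<rho>. sat_cnf \<rho> F \<longrightarrow> \<rho> x = eval \<rho> \<psi>)"

end

theory Submission
  imports Defs
begin

text \<open>A model \<rho> of \<phi> \<and> \<phi>_A \<and> \<tau> \<and> \<sigma>|_U agrees with \<sigma> on U and on A. Each \<psi> e
  reads only D(e) \<union> A, and both \<rho> and \<sigma> satisfy e \<leftrightarrow> \<psi> e (\<rho> because \<psi> e is a
  definition in \<phi> \<and> \<phi>_A), so they also agree on E. As \<phi> only mentions U \<union> E, \<sigma> would
  satisfy \<phi>.\<close>

lemma eval_cong: "(\<And>x. x \<in> fvars f \<Longrightarrow> r x = s x) \<Longrightarrow> eval r f = eval s f"
  by (induction f) auto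

lemma sat_cnf_cong:
  assumes "\<And>x. x \<in> cnf_vars F \<Longrightarrow> r x = s x"
  shows "sat_cnf r F = sat_cnf s F"
  using assms unfolding sat_cnf_def sat_clause_def cnf_vars_def by blast

lemma sat_cnf_Un: "sat_cnf r (F \<union> G) \<longleftrightarrow> sat_cnf r F \<and> sat_cnf r G"
  unfolding sat_cnf_def by blast

lemma is_definition_agree:
  assumes "is_definition \<psi> x X F" and "sat_cnf r F"
    and "\<And>y. y \<in> X \<Longrightarrow> r y = s y" and "s x = eval s \<psi>"
  shows "r x = s x"
proof -
  have "r x = eval r \<psi>" using assms(1,2) unfolding is_definition_def by blast
  also have "\<dots> = eval s \<psi>"
    using assms(1,3) unfolding is_definition_def by (intro eval_cong) blast
  finally show ?thesis using assms(4) by simp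
qed

theorem lemma7:
  fixes U :: "'u set" and E :: "'e set" and D :: "'e \<Rightarrow> 'u set"
    and \<phi> :: "('u,'e) var cnf" and A :: "('u,'e) var set"
    and \<tau> \<sigma> :: "('u,'e) var \<Rightarrow> bool" and \<psi> :: "'e \<Rightarrow> ('u,'e) var form"
  assumes "dqbf U E D \<phi>"
    and "A \<subseteq> arbiters E D"
    and "\<And>e. e \<in> E \<Longrightarrow>
           is_definition (\<psi> e) (EVar e) (UVar ` D e \<union> A) (\<phi> \<union> arb_clauses D A)"
    and "\<not> sat_cnf \<sigma> \<phi>"
    and "\<forall>e \<in> E. \<sigma> (EVar e) = eval \<sigma> (\<psi> e)"
    and "\<forall>a \<in> A. \<sigma> a = \<tau> a"
  shows "\<not> (\<exists>\<rho>. sat_cnf \<rho> \<phi> \<and> sat_cnf \<rho> (arb_clauses D A)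
              \<and> (\<forall>a \<in> A. \<rho> a = \<tau> a) \<and> (\<forall>u \<in> U. \<rho> (UVar u) = \<sigma> (UVar u)))"
proof
  assume "\<exists>\<rho>. sat_cnf \<rho> \<phi> \<and> sat_cnf \<rho> (arb_clauses D A)
              \<and> (\<forall>a \<in> A. \<rho> a = \<tau> a) \<and> (\<forall>u \<in> U. \<rho> (UVar u) = \<sigma> (UVar u))"
  then obtain \<rho> where sat: "sat_cnf \<rho> (\<phi> \<union> arb_clauses D A)"
    and on_A: "\<forall>a \<in> A. \<rho> a = \<sigma> a" and on_U: "\<forall>u \<in> U. \<rho> (UVar u) = \<sigma> (UVar u)"
    using assms(6) by (auto simp: sat_cnf_Un)
  have on_E: "\<rho> (EVar e) = \<sigma> (EVar e)" if "e \<in> E" for e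
  proof (rule is_definition_agree[OF assms(3)[OF that] sat])
    have "D e \<subseteq> U" using assms(1) that unfolding dqbf_def by blast
    then show "\<And>y. y \<in> UVar ` D e \<union> A \<Longrightarrow> \<rho> y = \<sigma> y" using on_U on_A by blast
  qed (use assms(5) that in blast)
  have "cnf_vars \<phi> \<subseteq> UVar ` U \<union> EVar ` E" using assms(1) unfolding dqbf_def by blast
  then have "sat_cnf \<rho> \<phi> = sat_cnf \<sigma> \<phi>" using on_U on_E by (intro sat_cnf_cong) blast
  then show False using sat assms(4) by (simp add: sat_cnf_Un)
qed

end
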